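(* Regard spinors as vectors in the 4-dimensional Euclidean space $(\mathrm{Cl}^+(3),(\cdot,\cdot))$. Then: (i) $\{a_1a_1=1,\ a_1a_2\}$ is a set of simple roots of a root system of type $A_2$ contained in the $H_4$ root system $2I$; (ii) $\{a_1a_1=1,\ a_2a_3\}$ is a set of simple roots of a root system of type $H_2$ contained in $2I$; (iii) $\{a_1a_1,\ a_1a_2,\ a_1a_2a_3a_2a_3a_1a_2a_3,\ a_3a_2a_1a_3a_2a_1a_3a_2\}$ is a set of simple roots of a root system of type $D_4$ contained in $2I$. (Here products are geometric products, and a set of simple roots of the given type means its Cartan matrix $A_{ij}=2(\alpha_i,\alpha_j)/(\alpha_i,\alpha_i)$ is that of the given type and the root system generated from it by the reflections $s_R(X)=-R\tilde XR$ lies in $2I$.)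
   Context: $\mathrm{Cl}(3)$ is the real Clifford algebra of Euclidean $\mathbb{R}^3$ with orthonormal basis $e_1,e_2,e_3$ ($e_i^2=1$, $e_ie_j=-e_je_i$ for $i\neq j$). Its even subalgebra $\mathrm{Cl}^+(3)$ is spanned by $1,e_2e_3,e_3e_1,e_1e_2$ (spinors). Reversal $\tilde{\ }$ reverses the order of vector factors. The spinor inner product is $(R_1,R_2)=\tfrac12(R_1\tilde R_2+R_2\tilde R_1)$, making $\mathrm{Cl}^+(3)$ a 4D Euclidean space with orthonormal basis $1,e_2e_3,e_3e_1,e_1e_2$; for a unit spinor $R$ the reflection in the hyperplane orthogonal to $R$ is $s_R(X)=X-2(R,X)R=-R\tilde XR$. Root systems are finite sets of nonzero vectors spanning their span, containing only $\pm\alpha$ among multiples of each root $\alpha$, and closed under the reflections in their roots. Let $\tau=\frac{1+\sqrt5}{2}$. The $H_3$ simple roots are $a_1=e_2$, $a_2=\tfrac12(-\tau e_1-e_2-(\tau-1)e_3)$, $a_3=e_1$. The binary icosahedral group $2I$ is the set of all products of an even number of factors from $\{a_1,a_2,a_3\}$ (a group of order 120); viewed as 120 vectors in the 4D spinor space it is the $H_4$ root system. The Cartan matrices are $A_2$: $\begin{pmatrix}2&-1\\-1&2\end{pmatrix}$; $H_2$: $\begin{pmatrix}2&-\tau\\-\tau&2\end{pmatrix}$; $D_4$: the standard Cartan matrix of the $D_4$ Dynkin diagram (one central node joined by simple links to three others). *)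

theory Defs
  imports Complex_Main
begin

text \<open>A multivector is represented by its coefficients on the basis blades
  e_I, I a subset of {1,2,3} (listed in increasing order); coefficients on
  sets outside Pow {1,2,3} are zero for all elements built below.\<close>

type_synonym cl3 = "nat set \<Rightarrow> real"

definition blades :: "nat set set" where
  "blades = Pow {1,2,3}"

text \<open>Sign of e_I e_J = sign * e_(I symmetric-difference J), using e_i^2 = 1 and
  anticommutation of distinct e_i.\<close>
definition bsign :: "nat set \<Rightarrow> nat set \<Rightarrow> real" where
  "bsign I J = (-1) ^ card {(i, j). i \<in> I \<and> j \<in> J \<and> j < i}"

definition cmul :: "cl3 \<Rightarrow> cl3 \<Rightarrow> cl3" where
  "cmul x y = (\<lambda>S. \<Sum>I\<in>blades. \<Sum>J\<in>blades.
      if (I - J) \<union> (J - I) = S then bsign I J * x I * y J else 0)"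

definition cadd :: "cl3 \<Rightarrow> cl3 \<Rightarrow> cl3" where
  "cadd x y = (\<lambda>S. x S + y S)"

definition cscale :: "real \<Rightarrow> cl3 \<Rightarrow> cl3" where
  "cscale c x = (\<lambda>S. c * x S)"

definition cone :: cl3 where
  "cone = (\<lambda>S. if S = {} then 1 else 0)"

definition cvec :: "nat \<Rightarrow> cl3" where
  "cvec i = (\<lambda>S. if S = {i} then 1 else 0)"

text \<open>Reversion: reverses the order of vector factors of a blade.\<close>
definition crev :: "cl3 \<Rightarrow> cl3" where
  "crev x = (\<lambda>S. (-1) ^ (card S * (card S - 1) div 2) * x S)"

definition cprod :: "cl3 list \<Rightarrow> cl3" where
  "cprod xs = foldr cmul xs cone"

text \<open>Spinor inner product (R1,R2) = 1/2 (R1 ~R2 + R2 ~R1), a scalar; we take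
  its scalar (grade 0) component.\<close>
definition sinner :: "cl3 \<Rightarrow> cl3 \<Rightarrow> real" where
  "sinner x y = (1/2) * (cmul x (crev y) {} + cmul y (crev x) {})"

definition srefl :: "cl3 \<Rightarrow> cl3 \<Rightarrow> cl3" where
  "srefl R X = cscale (-1) (cmul R (cmul (crev X) R))"

definition tau :: real where
  "tau = (1 + sqrt 5) / 2"

definition a1 :: cl3 where "a1 = cvec 2"
definition a2 :: cl3 where
  "a2 = cscale (1/2) (cadd (cscale (- tau) (cvec 1))
                       (cadd (cscale (-1) (cvec 2)) (cscale (- (tau - 1)) (cvec 3))))"
definition a3 :: cl3 where "a3 = cvec 1"

definition twoI :: "cl3 set" where
  "twoI = {cprod xs | xs. set xs \<subseteq> {a1, a2, a3} \<and> even (length xs)}"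

inductive_set gen_roots :: "cl3 set \<Rightarrow> cl3 set" for S :: "cl3 set" where
  base: "\<alpha> \<in> S \<Longrightarrow> \<alpha> \<in> gen_roots S"
| refl: "\<alpha> \<in> gen_roots S \<Longrightarrow> \<beta> \<in> gen_roots S \<Longrightarrow> srefl \<alpha> \<beta> \<in> gen_roots S"

definition cartan :: "cl3 list \<Rightarrow> nat \<Rightarrow> nat \<Rightarrow> real" where
  "cartan rs i j = 2 * sinner (rs ! i) (rs ! j) / sinner (rs ! i) (rs ! i)"

definition simple_roots_in_2I :: "cl3 list \<Rightarrow> real list list \<Rightarrow> bool" where
  "simple_roots_in_2I rs M \<longleftrightarrow>
     length M = length rs \<and> (\<forall>i < length rs. length (M ! i) = length rs) \<and>
     (\<forall>i < length rs. \<forall>j < length rs. cartan rs i j = M ! i ! j) \<and>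
     set rs \<subseteq> twoI \<and> gen_roots (set rs) \<subseteq> twoI"

definition cartan_A2 :: "real list list" where
  "cartan_A2 = [[2, -1], [-1, 2]]"

definition cartan_H2 :: "real list list" where
  "cartan_H2 = [[2, - tau], [- tau, 2]]"

definition cartan_D4 :: "real list list" where
  "cartan_D4 = [[2, -1, -1, -1], [-1, 2, 0, 0], [-1, 0, 2, 0], [-1, 0, 0, 2]]"

end

theory Submission
  imports Defs
begin

(* Multivectors are handled through their eight coordinates on the blades, which turns the
   geometric product into an explicit bilinear table.  The H_3 simple roots a_i are vectors, hence
   fixed by reversion, so for even products R = a_I and X = a_J the reflection
   s_R(X) = -R X~ R equals (-1) a_I a_J^rev a_I; since -1 = a_1 a_3 a_1 a_3 this is again an even
   product.  Thus the root system generated by any subset of 2I stays in 2I, and what remains is to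
   compute the given spinors in coordinates and evaluate their Cartan matrices, using
   tau^2 = tau + 1. *)

lemma bsign_prod:
  assumes "finite I" "finite J"
  shows "bsign I J = (\<Prod>i\<in>I. \<Prod>j\<in>J. if j < i then -1 else 1)"
proof -
  have "{(i, j). i \<in> I \<and> j \<in> J \<and> j < i} = (SIGMA i:I. {j\<in>J. j < i})"
    by auto
  then have "bsign I J = (-1) ^ (\<Sum>i\<in>I. card {j\<in>J. j < i})"
    using assms by (simp add: bsign_def)
  also have "\<dots> = (\<Prod>i\<in>I. \<Prod>j\<in>{j\<in>J. j < i}. -1)"
    by (simp add: power_sum)
  also have "\<dots> = (\<Prod>i\<in>I. \<Prod>j\<in>J. if j < i then -1 else 1)"
    using assms(2) by (simp only: prod.inter_filter)
  finally show ?thesis .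
qed

lemma finite_blades [simp]: "finite blades"
  by (simp add: blades_def)

lemma cmul_apply:
  assumes "S \<in> blades"
  shows "cmul x y S = (\<Sum>I\<in>blades. bsign I (sym_diff I S) * x I * y (sym_diff I S))"
proof -
  have "sym_diff I J = S \<longleftrightarrow> J = sym_diff I S" for I J :: "nat set"
    by blast
  moreover have "sym_diff I S \<in> blades" if "I \<in> blades" for I
    using that assms by (auto simp: blades_def)
  ultimately show ?thesis
    unfolding cmul_def by simp
qed

lemma cmul_outside_blades: "S \<notin> blades \<Longrightarrow> cmul x y S = 0"
  unfolding cmul_def blades_def by (auto intro!: sum.neutral)

lemma cmul_cscale_left: "cmul (cscale c x) y = cscale c (cmul x y)"
  unfolding cmul_def cscale_def by (simp add: sum_distrib_left mult_ac if_distrib cong: if_cong)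

definition restrict_blades :: "cl3 \<Rightarrow> cl3" where
  "restrict_blades x = (\<lambda>S. if S \<in> blades then x S else 0)"

lemma cmul_restrict_blades_left [simp]: "cmul (restrict_blades x) y = cmul x y"
  unfolding cmul_def restrict_blades_def by (intro ext sum.cong) auto

lemma cmul_restrict_blades_right [simp]: "cmul x (restrict_blades y) = cmul x y"
  unfolding cmul_def restrict_blades_def by (intro ext sum.cong) auto

lemma restrict_blades_cmul: "restrict_blades (cmul x y) = cmul x y"
  unfolding restrict_blades_def by (auto simp: cmul_outside_blades)

definition mvec :: "real \<Rightarrow> real \<Rightarrow> real \<Rightarrow> real \<Rightarrow> real \<Rightarrow> real \<Rightarrow> real \<Rightarrow> real \<Rightarrow> cl3" where
  "mvec c0 c1 c2 c3 c12 c13 c23 c123 = (\<lambda>S.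
     if S = {} then c0 else if S = {1} then c1 else if S = {2} then c2 else if S = {3} then c3
     else if S = {1,2} then c12 else if S = {1,3} then c13 else if S = {2,3} then c23
     else if S = {1,2,3} then c123 else 0)"

lemma blades_eq: "blades = {{}, {1}, {2}, {3}, {1,2}, {1,3}, {2,3}, {1,2,3}}"
  unfolding blades_def by (simp add: Pow_insert insert_commute)

lemma blade_cases:
  assumes "S \<in> blades"
  obtains "S = {}" | "S = {1}" | "S = {2}" | "S = {3}" | "S = {1,2}" | "S = {1,3}" | "S = {2,3}"
    | "S = {1,2,3}"
  using assms unfolding blades_eq by blast

(* set_eq_subset decides equalities of set literals; subset_empty has to go, as it would turn
   A \<subseteq> {} back into an equation and loop. *)
lemma sum_blades:
  "(\<Sum>I\<in>blades. f I) = f {} + f {1} + f {2} + f {3} + f {1,2} + f {1,3} + f {2,3} + f {1,2,3}"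
  unfolding blades_eq by (simp add: set_eq_subset add.assoc del: subset_empty)

lemma mvec_apply [simp]:
  "mvec c0 c1 c2 c3 c12 c13 c23 c123 {} = c0"
  "mvec c0 c1 c2 c3 c12 c13 c23 c123 {1} = c1"
  "mvec c0 c1 c2 c3 c12 c13 c23 c123 {2} = c2"
  "mvec c0 c1 c2 c3 c12 c13 c23 c123 {3} = c3"
  "mvec c0 c1 c2 c3 c12 c13 c23 c123 {1,2} = c12"
  "mvec c0 c1 c2 c3 c12 c13 c23 c123 {1,3} = c13"
  "mvec c0 c1 c2 c3 c12 c13 c23 c123 {2,3} = c23"
  "mvec c0 c1 c2 c3 c12 c13 c23 c123 {1,2,3} = c123"
  by (simp_all add: mvec_def set_eq_subset del: subset_empty)

(* The simplifier normalises 1 :: nat to Suc 0 (One_nat_def), so the rules are needed in both forms. *)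
lemmas mvec_apply_Suc_0 [simp] = mvec_apply [unfolded One_nat_def]

lemma mvec_outside_blades: "S \<notin> blades \<Longrightarrow> mvec c0 c1 c2 c3 c12 c13 c23 c123 S = 0"
  unfolding mvec_def blades_eq by auto

lemma eq_mvecI:
  assumes "\<And>S. S \<notin> blades \<Longrightarrow> x S = 0"
    and "x {} = c0" "x {1} = c1" "x {2} = c2" "x {3} = c3"
    and "x {1,2} = c12" "x {1,3} = c13" "x {2,3} = c23" "x {1,2,3} = c123"
  shows "x = mvec c0 c1 c2 c3 c12 c13 c23 c123"
proof
  fix S
  show "x S = mvec c0 c1 c2 c3 c12 c13 c23 c123 S"
  proof (cases "S \<in> blades")
    case True
    then show ?thesis
      by (cases rule: blade_cases) (simp_all only: assms mvec_apply)
  qed (simp add: assms mvec_outside_blades)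
qed

lemma mvec_eq_iff:
  "mvec u0 u1 u2 u3 u4 u5 u6 u7 = mvec v0 v1 v2 v3 v4 v5 v6 v7 \<longleftrightarrow>
     u0 = v0 \<and> u1 = v1 \<and> u2 = v2 \<and> u3 = v3 \<and> u4 = v4 \<and> u5 = v5 \<and> u6 = v6 \<and> u7 = v7"
  by (metis mvec_apply)

lemma restrict_blades_eq_mvec:
  "restrict_blades x = mvec (x {}) (x {1}) (x {2}) (x {3}) (x {1,2}) (x {1,3}) (x {2,3}) (x {1,2,3})"
  by (rule eq_mvecI) (simp_all add: restrict_blades_def blades_def)

lemma cmul_mvec:
  "cmul (mvec u0 u1 u2 u3 u4 u5 u6 u7) (mvec v0 v1 v2 v3 v4 v5 v6 v7) = mvec
     (u0*v0 + u1*v1 + u2*v2 + u3*v3 - u4*v4 - u5*v5 - u6*v6 - u7*v7)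
     (u0*v1 + u1*v0 - u2*v4 - u3*v5 + u4*v2 + u5*v3 - u6*v7 - u7*v6)
     (u0*v2 + u1*v4 + u2*v0 - u3*v6 - u4*v1 + u5*v7 + u6*v3 + u7*v5)
     (u0*v3 + u1*v5 + u2*v6 + u3*v0 - u4*v7 - u5*v1 - u6*v2 - u7*v4)
     (u0*v4 + u1*v2 - u2*v1 + u3*v7 + u4*v0 - u5*v6 + u6*v5 + u7*v3)
     (u0*v5 + u1*v3 - u2*v7 - u3*v1 + u4*v6 + u5*v0 - u6*v4 - u7*v2)
     (u0*v6 + u1*v7 + u2*v3 - u3*v2 - u4*v5 + u5*v4 + u6*v0 + u7*v1)
     (u0*v7 + u1*v6 - u2*v5 + u3*v4 + u4*v3 - u5*v2 + u6*v1 + u7*v0)"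
  (is "?l = ?r")
proof
  fix S
  show "?l S = ?r S"
  proof (cases "S \<in> blades")
    case True
    then show ?thesis
      unfolding cmul_apply[OF True] sum_blades
      by (cases rule: blade_cases)
        (simp add: insert_Diff_if;
         simp add: mvec_def set_eq_subset del: subset_empty;
         simp add: bsign_prod algebra_simps)+
  qed (simp add: cmul_outside_blades mvec_outside_blades)
qed

lemma cmul_assoc: "cmul (cmul x y) z = cmul x (cmul y z)"
proof -
  have "cmul (cmul x y) z = cmul (cmul (restrict_blades x) (restrict_blades y)) (restrict_blades z)"
    by simp
  also have "\<dots> = cmul (restrict_blades x) (cmul (restrict_blades y) (restrict_blades z))"
    unfolding restrict_blades_eq_mvec cmul_mvec by (simp add: algebra_simps)
  finally show ?thesis
    by simp
qed

lemma crev_mvec: "crev (mvec u0 u1 u2 u3 u4 u5 u6 u7) = mvec u0 u1 u2 u3 (-u4) (-u5) (-u6) (-u7)"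
  by (rule eq_mvecI) (simp_all add: crev_def mvec_outside_blades)

lemma crev_cmul: "crev (cmul x y) = cmul (crev y) (crev x)"
proof -
  have "crev (cmul x y) = crev (cmul (restrict_blades x) (restrict_blades y))"
    by simp
  also have "\<dots> = cmul (restrict_blades (crev y)) (restrict_blades (crev x))"
    unfolding restrict_blades_eq_mvec cmul_mvec crev_mvec by (simp add: crev_def algebra_simps)
  finally show ?thesis
    by simp
qed

lemma cone_eq_mvec: "cone = mvec 1 0 0 0 0 0 0 0"
  by (rule eq_mvecI) (auto simp: cone_def blades_def)

lemma cvec_eq_mvec:
  "cvec 1 = mvec 0 1 0 0 0 0 0 0" "cvec 2 = mvec 0 0 1 0 0 0 0 0" "cvec 3 = mvec 0 0 0 1 0 0 0 0"
  by (rule eq_mvecI; auto simp: cvec_def blades_def)+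

lemma cscale_mvec:
  "cscale c (mvec u0 u1 u2 u3 u4 u5 u6 u7) = mvec (c*u0) (c*u1) (c*u2) (c*u3) (c*u4) (c*u5) (c*u6) (c*u7)"
  by (rule eq_mvecI) (simp_all add: cscale_def mvec_outside_blades)

lemma cadd_mvec:
  "cadd (mvec u0 u1 u2 u3 u4 u5 u6 u7) (mvec v0 v1 v2 v3 v4 v5 v6 v7) =
     mvec (u0+v0) (u1+v1) (u2+v2) (u3+v3) (u4+v4) (u5+v5) (u6+v6) (u7+v7)"
  by (rule eq_mvecI) (simp_all add: cadd_def mvec_outside_blades)

lemma sinner_mvec:
  "sinner (mvec u0 u1 u2 u3 u4 u5 u6 u7) (mvec v0 v1 v2 v3 v4 v5 v6 v7) =
     u0*v0 + u1*v1 + u2*v2 + u3*v3 + u4*v4 + u5*v5 + u6*v6 + u7*v7"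
  unfolding sinner_def crev_mvec cmul_mvec by (simp add: algebra_simps)

lemma cmul_cone_left: "cmul cone y = restrict_blades y"
  unfolding cone_eq_mvec
  by (subst cmul_restrict_blades_right [symmetric]) (simp add: restrict_blades_eq_mvec cmul_mvec)

lemma cmul_cone_right: "cmul x cone = restrict_blades x"
  unfolding cone_eq_mvec
  by (subst cmul_restrict_blades_left [symmetric]) (simp add: restrict_blades_eq_mvec cmul_mvec)

lemma cprod_Nil [simp]: "cprod [] = cone"
  by (simp add: cprod_def)

lemma cprod_Cons: "cprod (x # xs) = cmul x (cprod xs)"
  by (simp add: cprod_def)

lemma restrict_blades_cone: "restrict_blades cone = cone"
  by (simp add: cone_eq_mvec restrict_blades_eq_mvec)

lemma restrict_blades_cprod [simp]: "restrict_blades (cprod xs) = cprod xs"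
  by (cases xs) (simp_all add: cprod_Cons restrict_blades_cmul restrict_blades_cone)

lemma cprod_append: "cprod (xs @ ys) = cmul (cprod xs) (cprod ys)"
  by (induction xs) (simp_all add: cprod_Cons cmul_cone_left cmul_assoc)

lemma crev_cprod:
  assumes "\<And>x. x \<in> set xs \<Longrightarrow> crev x = x"
  shows "crev (cprod xs) = cprod (rev xs)"
  using assms
proof (induction xs)
  case Nil
  then show ?case
    by (simp add: cone_eq_mvec crev_mvec)
next
  case (Cons x xs)
  then have "crev (cprod (x # xs)) = cmul (cprod (rev xs)) x"
    by (simp add: cprod_Cons crev_cmul)
  also have "\<dots> = cprod (rev (x # xs))"
    by (simp add: cprod_Cons cprod_append cmul_cone_right)
  finally show ?case .
qed

lemma srefl_cprod:
  assumes "\<And>y. y \<in> set ys \<Longrightarrow> crev y = y"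
  shows "srefl (cprod xs) (cprod ys) = cscale (-1) (cprod (xs @ rev ys @ xs))"
  using crev_cprod[OF assms] by (simp add: srefl_def cprod_append)

definition even_products :: "cl3 set \<Rightarrow> cl3 set" where
  "even_products V = {cprod xs | xs. set xs \<subseteq> V \<and> even (length xs)}"

lemma cprod_in_even_products: "set xs \<subseteq> V \<Longrightarrow> even (length xs) \<Longrightarrow> cprod xs \<in> even_products V"
  unfolding even_products_def by blast

lemma cscale_minus_one_cprod:
  assumes "cprod ws = cscale (-1) cone"
  shows "cscale (-1) (cprod zs) = cprod (ws @ zs)"
  by (simp add: cprod_append assms cmul_cscale_left cmul_cone_left)

lemma srefl_in_even_products:
  assumes rev_fixed: "\<And>v. v \<in> V \<Longrightarrow> crev v = v"
    and minus_one: "cscale (-1) cone \<in> even_products V"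
    and "R \<in> even_products V" "X \<in> even_products V"
  shows "srefl R X \<in> even_products V"
proof -
  obtain ws where ws: "cscale (-1) cone = cprod ws" "set ws \<subseteq> V" "even (length ws)"
    using minus_one unfolding even_products_def by blast
  obtain xs where xs: "R = cprod xs" "set xs \<subseteq> V" "even (length xs)"
    using assms(3) unfolding even_products_def by blast
  obtain ys where ys: "X = cprod ys" "set ys \<subseteq> V" "even (length ys)"
    using assms(4) unfolding even_products_def by blast
  have "srefl R X = cprod (ws @ xs @ rev ys @ xs)"
    unfolding xs(1) ys(1) using ys(2) rev_fixed
    by (subst srefl_cprod) (auto simp: cscale_minus_one_cprod[OF ws(1)[symmetric]])
  then show ?thesis
    using ws xs ys by (simp add: cprod_in_even_products)
qed

lemma gen_roots_subset_even_products:
  assumes "\<And>v. v \<in> V \<Longrightarrow> crev v = v" "cscale (-1) cone \<in> even_products V"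
    and "S \<subseteq> even_products V"
  shows "gen_roots S \<subseteq> even_products V"
proof
  fix x
  assume "x \<in> gen_roots S"
  then show "x \<in> even_products V"
    by induction (use assms in \<open>auto intro: srefl_in_even_products\<close>)
qed

lemma tau_mult_tau: "tau * tau = tau + 1" "tau * (tau * x) = tau * x + x"
  unfolding tau_def by (simp_all add: field_simps)

lemma a1_eq_mvec: "a1 = mvec 0 0 1 0 0 0 0 0"
  by (simp add: a1_def cvec_eq_mvec)

lemma a2_eq_mvec: "a2 = mvec 0 (- tau / 2) (- 1 / 2) ((1 - tau) / 2) 0 0 0 0"
  unfolding a2_def cvec_eq_mvec cscale_mvec cadd_mvec by simp

lemma a3_eq_mvec: "a3 = mvec 0 1 0 0 0 0 0 0"
  unfolding a3_def cvec_eq_mvec ..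

lemma crev_H3_simple_root: "v \<in> {a1, a2, a3} \<Longrightarrow> crev v = v"
  by (auto simp: a1_eq_mvec a2_eq_mvec a3_eq_mvec crev_mvec)

lemma twoI_eq_even_products: "twoI = even_products {a1, a2, a3}"
  unfolding twoI_def even_products_def ..

lemma cprod_in_twoI: "set xs \<subseteq> {a1, a2, a3} \<Longrightarrow> even (length xs) \<Longrightarrow> cprod xs \<in> twoI"
  unfolding twoI_eq_even_products by (rule cprod_in_even_products)

lemma minus_one_in_twoI: "cscale (-1) cone \<in> twoI"
proof -
  have "cprod [a1, a3, a1, a3] = cscale (-1) cone"
    by (simp add: cprod_Cons a1_eq_mvec a3_eq_mvec cone_eq_mvec cmul_mvec cscale_mvec)
  then show ?thesis
    using cprod_in_twoI[of "[a1, a3, a1, a3]"] by simp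
qed

lemma gen_roots_subset_twoI: "S \<subseteq> twoI \<Longrightarrow> gen_roots S \<subseteq> twoI"
  using crev_H3_simple_root minus_one_in_twoI unfolding twoI_eq_even_products
  by (rule gen_roots_subset_even_products)

lemma simple_roots_in_2I_iff_cartan:
  assumes "set rs \<subseteq> twoI"
  shows "simple_roots_in_2I rs M \<longleftrightarrow>
    length M = length rs \<and> (\<forall>i < length rs. length (M ! i) = length rs) \<and>
    (\<forall>i < length rs. \<forall>j < length rs. cartan rs i j = M ! i ! j)"
  using assms gen_roots_subset_twoI by (auto simp: simple_roots_in_2I_def)

lemma cprod_a1_a1: "cprod [a1, a1] = cone"
  by (simp add: cprod_Cons a1_eq_mvec cone_eq_mvec cmul_mvec)

lemma cprod_a1_a2: "cprod [a1, a2] = mvec (- 1 / 2) 0 0 0 (tau / 2) 0 ((1 - tau) / 2) 0"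
  by (simp add: cprod_Cons a1_eq_mvec a2_eq_mvec cone_eq_mvec cmul_mvec mvec_eq_iff)

lemma cprod_a2_a3: "cprod [a2, a3] = mvec (- tau / 2) 0 0 0 (1 / 2) ((tau - 1) / 2) 0 0"
  by (simp add: cprod_Cons a2_eq_mvec a3_eq_mvec cone_eq_mvec cmul_mvec mvec_eq_iff field_simps)

lemma cprod_D4_root3:
  "cprod [a1, a2, a3, a2, a3, a1, a2, a3] = mvec (- 1 / 2) 0 0 0 (- 1 / 2) (1 / 2) (- 1 / 2) 0"
  by (simp add: cprod_Cons a1_eq_mvec a2_eq_mvec a3_eq_mvec cone_eq_mvec cmul_mvec
      algebra_simps tau_mult_tau)
    (simp add: mvec_eq_iff field_simps)

lemma cprod_D4_root4:
  "cprod [a3, a2, a1, a3, a2, a1, a3, a2] = mvec (- 1 / 2) 0 0 0 ((1 - tau) / 2) (- tau / 2) 0 0"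
  by (simp add: cprod_Cons a1_eq_mvec a2_eq_mvec a3_eq_mvec cone_eq_mvec cmul_mvec
      algebra_simps tau_mult_tau)
    (simp add: mvec_eq_iff field_simps)

lemma simple_roots_A2: "simple_roots_in_2I [cprod [a1, a1], cprod [a1, a2]] cartan_A2"
  by (subst simple_roots_in_2I_iff_cartan, simp add: cprod_in_twoI)
    (simp add: cprod_a1_a1 cprod_a1_a2 cone_eq_mvec cartan_def sinner_mvec cartan_A2_def All_less_Suc
       algebra_simps tau_mult_tau,
     simp add: field_simps)

lemma simple_roots_H2: "simple_roots_in_2I [cprod [a1, a1], cprod [a2, a3]] cartan_H2"
  by (subst simple_roots_in_2I_iff_cartan, simp add: cprod_in_twoI)
    (simp add: cprod_a1_a1 cprod_a2_a3 cone_eq_mvec cartan_def sinner_mvec cartan_H2_def All_less_Suc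
       algebra_simps tau_mult_tau,
     simp add: field_simps)

lemma simple_roots_D4:
  "simple_roots_in_2I
     [cprod [a1, a1], cprod [a1, a2], cprod [a1, a2, a3, a2, a3, a1, a2, a3],
      cprod [a3, a2, a1, a3, a2, a1, a3, a2]] cartan_D4"
  by (subst simple_roots_in_2I_iff_cartan, simp add: cprod_in_twoI)
    (simp add: cprod_a1_a1 cprod_a1_a2 cprod_D4_root3 cprod_D4_root4 cone_eq_mvec cartan_def sinner_mvec
       cartan_D4_def All_less_Suc algebra_simps tau_mult_tau,
     simp add: field_simps)

theorem mainTheorem2:
  shows "cprod [a1, a1] = cone
    \<and> simple_roots_in_2I [cprod [a1, a1], cprod [a1, a2]] cartan_A2
    \<and> simple_roots_in_2I [cprod [a1, a1], cprod [a2, a3]] cartan_H2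
    \<and> simple_roots_in_2I
           [cprod [a1, a1], cprod [a1, a2], cprod [a1, a2, a3, a2, a3, a1, a2, a3],
            cprod [a3, a2, a1, a3, a2, a1, a3, a2]] cartan_D4"
  using cprod_a1_a1 simple_roots_A2 simple_roots_H2 simple_roots_D4 by blast

end
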